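(* Let $G$ be the $m\times n$ grid with $m,n\ge 2$, and let $L$ be a landmark set with $(1,z),(m,z')\in L$, where $1\le z<z'\le n$, such that $L$ contains no vertex $(1,w)$ with $z<w\le z'$. Then $L$ contains a vertex $(a,b)$ such that either ($b\le z$ and $a>1$) or ($b>z'$ and $a=1$).
   Context: The $m\times n$ grid $G$ has vertex set $V=\{(i,j):1\le i\le m,\ 1\le j\le n\}$, with $(i_1,j_1),(i_2,j_2)$ adjacent iff $|i_1-i_2|+|j_1-j_2|=1$; thus $d((i_1,j_1),(i_2,j_2))=|i_1-i_2|+|j_1-j_2|$. A vertex $x$ separates $u,v$ if $d(x,u)\neq d(x,v)$. A landmark set is $L\subseteq V$ such that every pair of distinct vertices is separated by some vertex of $L$. *)

theory Defs
  imports Main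
begin

definition grid_vertices :: "nat \<Rightarrow> nat \<Rightarrow> (nat \<times> nat) set" where
  "grid_vertices m n = {(i, j). 1 \<le> i \<and> i \<le> m \<and> 1 \<le> j \<and> j \<le> n}"

definition grid_dist :: "nat \<times> nat \<Rightarrow> nat \<times> nat \<Rightarrow> nat" where
  "grid_dist u v = nat \<bar>int (fst u) - int (fst v)\<bar> + nat \<bar>int (snd u) - int (snd v)\<bar>"

definition separates :: "nat \<times> nat \<Rightarrow> nat \<times> nat \<Rightarrow> nat \<times> nat \<Rightarrow> bool" where
  "separates x u v \<longleftrightarrow> grid_dist x u \<noteq> grid_dist x v"

definition landmark_set :: "nat \<Rightarrow> nat \<Rightarrow> (nat \<times> nat) set \<Rightarrow> bool" where
  "landmark_set m n L \<longleftrightarrow> L \<subseteq> grid_vertices m n \<and>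
     (\<forall>u \<in> grid_vertices m n. \<forall>v \<in> grid_vertices m n. u \<noteq> v \<longrightarrow> (\<exists>x \<in> L. separates x u v))"

end

theory Submission
  imports Defs
begin

text \<open>The two vertices \<open>(i, j+1)\<close> and \<open>(i+1, j)\<close> of a unit antidiagonal are at equal distance
  from every vertex except those in the quadrant \<open>a \<le> i, b \<ge> j+1\<close> and the quadrant
  \<open>a \<ge> i+1, b \<le> j\<close>.
  Applied to \<open>(1, z+1)\<close> and \<open>(2, z)\<close>, a landmark set must contain a vertex \<open>(a, b)\<close> with
  \<open>a = 1, b > z\<close> or with \<open>a > 1, b \<le> z\<close>; the gap in row 1 forces \<open>b > z'\<close> in the first case.\<close>

lemma separates_antidiagonal_iff:
  "separates (a, b) (i, Suc j) (Suc i, j) \<longleftrightarrow> (a \<le> i \<and> b > j) \<or> (a > i \<and> b \<le> j)"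
  unfolding separates_def grid_dist_def by (cases "a \<le> i"; cases "b \<le> j") auto

lemma landmark_set_antidiagonal:
  assumes "landmark_set m n L" and "1 \<le> i" "i < m" and "1 \<le> j" "j < n"
  obtains a b where "(a, b) \<in> L" and "(a \<le> i \<and> b > j) \<or> (a > i \<and> b \<le> j)"
proof -
  have "(i, Suc j) \<in> grid_vertices m n" "(Suc i, j) \<in> grid_vertices m n"
    using assms(2-) by (auto simp: grid_vertices_def)
  moreover have "(i, Suc j) \<noteq> (Suc i, j)" by simp
  ultimately obtain x where "x \<in> L" "separates x (i, Suc j) (Suc i, j)"
    using assms(1) unfolding landmark_set_def by blast
  then show thesis
    using that by (cases x) (auto simp: separates_antidiagonal_iff)
qed

theorem mainTheorem12:
  fixes m n z z' :: nat and L :: "(nat \<times> nat) set"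
  assumes "m \<ge> 2" and "n \<ge> 2"
    and "landmark_set m n L"
    and "1 \<le> z" and "z < z'" and "z' \<le> n"
    and "(1, z) \<in> L" and "(m, z') \<in> L"
    and "\<forall>w. z < w \<and> w \<le> z' \<longrightarrow> (1, w) \<notin> L"
  shows "\<exists>(a, b) \<in> L. (b \<le> z \<and> a > 1) \<or> (b > z' \<and> a = 1)"
proof -
  obtain a b where ab: "(a, b) \<in> L" and quadrant: "(a \<le> 1 \<and> b > z) \<or> (a > 1 \<and> b \<le> z)"
    using landmark_set_antidiagonal[OF assms(3), of 1 z] assms(1,4-6) by auto
  have "a \<ge> 1"
    using ab assms(3) by (auto simp: landmark_set_def grid_vertices_def)
  with quadrant have "(b > z \<and> a = 1) \<or> (b \<le> z \<and> a > 1)"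
    by auto
  moreover have "\<not> (a = 1 \<and> z < b \<and> b \<le> z')"
    using ab assms(9) by auto
  ultimately have "(b \<le> z \<and> a > 1) \<or> (b > z' \<and> a = 1)"
    by auto
  with ab show ?thesis
    by blast
qed

end
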